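(* Let $G$ be a connected cograph with cotree $T$, let $w_1,\ldots,w_t$ be the children of the root of $T$, and for each $i$ let $G_i$ be the subgraph of $G$ induced by the leaves of the subtree of $T$ rooted at $w_i$. Then the family of sets $S_i=V(G)\setminus V(G_i)$, $i=1,\ldots,t$, is exactly the family of all minimal vertex separators of $G$.
   Context: A cograph is a graph that can be built from single vertices by repeatedly taking disjoint unions (label 0) and joins (label 1). The cotree of a cograph is the unique rooted tree whose leaves are the vertices of $G$, whose internal nodes are labelled 0 or 1 and each have at least two children, with labels alternating along every root-to-leaf path, such that two vertices are adjacent iff their lowest common ancestor is labelled 1; for a connected cograph the root is labelled 1. A vertex separator of a connected graph $G$ is a set $S\subset V(G)$ such that the subgraph induced on $V(G)\setminus S$ is disconnected; it is minimal if no proper subset of $S$ is a vertex separator.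
   Formalization: The family consists of the sets $S_i=V(G)\setminus V(G_i)$ only for those children $w_i$ of the root that are not leaves of T. The statement above fails without it. *)

theory Defs
  imports Main
begin

definition simple_graph :: "'a set \<Rightarrow> ('a \<Rightarrow> 'a \<Rightarrow> bool) \<Rightarrow> bool" where
  "simple_graph V E \<longleftrightarrow> finite V \<and> (\<forall>u v. E u v \<longrightarrow> u \<in> V \<and> v \<in> V \<and> u \<noteq> v \<and> E v u)"

definition reach_in :: "('a \<Rightarrow> 'a \<Rightarrow> bool) \<Rightarrow> 'a set \<Rightarrow> 'a \<Rightarrow> 'a \<Rightarrow> bool" where
  "reach_in E U = (\<lambda>x y. x \<in> U \<and> y \<in> U \<and> E x y)\<^sup>*\<^sup>*"

definition connected_on :: "('a \<Rightarrow> 'a \<Rightarrow> bool) \<Rightarrow> 'a set \<Rightarrow> bool" where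
  "connected_on E U \<longleftrightarrow> U \<noteq> {} \<and> (\<forall>x\<in>U. \<forall>y\<in>U. reach_in E U x y)"

definition disconnected_on :: "('a \<Rightarrow> 'a \<Rightarrow> bool) \<Rightarrow> 'a set \<Rightarrow> bool" where
  "disconnected_on E U \<longleftrightarrow> (\<exists>x\<in>U. \<exists>y\<in>U. \<not> reach_in E U x y)"

definition vertex_separator :: "'a set \<Rightarrow> ('a \<Rightarrow> 'a \<Rightarrow> bool) \<Rightarrow> 'a set \<Rightarrow> bool" where
  "vertex_separator V E S \<longleftrightarrow> S \<subset> V \<and> disconnected_on E (V - S)"

definition minimal_vertex_separator :: "'a set \<Rightarrow> ('a \<Rightarrow> 'a \<Rightarrow> bool) \<Rightarrow> 'a set \<Rightarrow> bool" where
  "minimal_vertex_separator V E S \<longleftrightarrow>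
     vertex_separator V E S \<and> (\<forall>S'. S' \<subset> S \<longrightarrow> \<not> vertex_separator V E S')"

text \<open>Cotrees: leaves carry vertices; internal nodes carry a label
  (False = 0 = disjoint union, True = 1 = join) and a list of children.\<close>
datatype 'a cotree = CLeaf 'a | CNode bool "'a cotree list"

fun leaves :: "'a cotree \<Rightarrow> 'a set" where
  "leaves (CLeaf a) = {a}"
| "leaves (CNode b ts) = (\<Union>t\<in>set ts. leaves t)"

fun children :: "'a cotree \<Rightarrow> 'a cotree list" where
  "children (CLeaf a) = []"
| "children (CNode b ts) = ts"

fun is_leaf :: "'a cotree \<Rightarrow> bool" where
  "is_leaf (CLeaf a) = True"
| "is_leaf (CNode b ts) = False"

fun label :: "'a cotree \<Rightarrow> bool option" where
  "label (CLeaf a) = None"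
| "label (CNode b ts) = Some b"

fun wf_cotree :: "'a cotree \<Rightarrow> bool" where
  "wf_cotree (CLeaf a) = True"
| "wf_cotree (CNode b ts) =
     (2 \<le> length ts \<and>
      (\<forall>t\<in>set ts. wf_cotree t \<and> label t \<noteq> Some b) \<and>
      (\<forall>i<length ts. \<forall>j<length ts. i \<noteq> j \<longrightarrow> leaves (ts ! i) \<inter> leaves (ts ! j) = {}))"

text \<open>u and v are leaves whose lowest common ancestor is labelled 1 (True).\<close>
fun lca_is_join :: "'a cotree \<Rightarrow> 'a \<Rightarrow> 'a \<Rightarrow> bool" where
  "lca_is_join (CLeaf a) u v = False"
| "lca_is_join (CNode b ts) u v =
     ((\<exists>t\<in>set ts. u \<in> leaves t \<and> v \<in> leaves t \<and> lca_is_join t u v) \<or>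
      (b \<and> (\<exists>i<length ts. \<exists>j<length ts. i \<noteq> j \<and> u \<in> leaves (ts ! i) \<and> v \<in> leaves (ts ! j))))"

definition is_cotree_of :: "'a cotree \<Rightarrow> 'a set \<Rightarrow> ('a \<Rightarrow> 'a \<Rightarrow> bool) \<Rightarrow> bool" where
  "is_cotree_of T V E \<longleftrightarrow> wf_cotree T \<and> leaves T = V \<and>
     (\<forall>u\<in>V. \<forall>v\<in>V. u \<noteq> v \<longrightarrow> (E u v \<longleftrightarrow> lca_is_join T u v))"

end

theory Submission
  imports Defs
begin

text \<open>Since the graph is connected, the root of the cotree is a join, so any two vertices
  below distinct children of the root are adjacent. Hence a disconnected set of surviving
  vertices lies below a single child \<open>w\<close>, i.e. every separator contains \<open>V - leaves w\<close>.
  Conversely, if \<open>w\<close> is not a leaf it is a union node, so \<open>V - leaves w\<close> is a separator,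
  and it is minimal because any vertex outside \<open>leaves w\<close> that survives is adjacent to
  all of \<open>leaves w\<close> and reconnects the graph.\<close>

lemma reach_in_refl: "reach_in E U x x"
  unfolding reach_in_def by simp

lemma reach_in_step: "x \<in> U \<Longrightarrow> y \<in> U \<Longrightarrow> E x y \<Longrightarrow> reach_in E U x y"
  unfolding reach_in_def by (rule r_into_rtranclp) simp

lemma reach_in_trans: "reach_in E U x y \<Longrightarrow> reach_in E U y z \<Longrightarrow> reach_in E U x z"
  unfolding reach_in_def by (rule rtranclp_trans)

lemma reach_in_closed:
  assumes "reach_in E U x y" "x \<in> A"
    and "\<And>a b. a \<in> A \<Longrightarrow> b \<in> U \<Longrightarrow> E a b \<Longrightarrow> b \<in> A"
  shows "y \<in> A"
  using assms(1,2) unfolding reach_in_def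
  by (induction rule: rtranclp_induct) (auto intro: assms(3))

lemma disconnected_on_obtains_distinct:
  assumes "disconnected_on E U"
  obtains x y where "x \<in> U" "y \<in> U" "x \<noteq> y"
  using assms reach_in_refl unfolding disconnected_on_def by metis

lemma disconnected_on_inside_part:
  assumes "U \<subseteq> \<Union>P"
    and complete: "\<And>p q x y. p \<in> P \<Longrightarrow> q \<in> P \<Longrightarrow> p \<noteq> q \<Longrightarrow> x \<in> p \<Longrightarrow> y \<in> q \<Longrightarrow> E x y"
    and "disconnected_on E U"
  shows "\<exists>p\<in>P. U \<subseteq> p"
proof -
  obtain x y where xy: "x \<in> U" "y \<in> U" "\<not> reach_in E U x y"
    using assms(3) unfolding disconnected_on_def by blast
  obtain p q where p: "p \<in> P" "x \<in> p" and q: "q \<in> P" "y \<in> q"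
    using xy(1,2) assms(1) by blast
  have "p = q"
    using complete[OF p(1) q(1) _ p(2) q(2)] reach_in_step[OF xy(1,2)] xy(3) by blast
  have "z \<in> p" if "z \<in> U" for z
  proof -
    obtain r where r: "r \<in> P" "z \<in> r" using \<open>z \<in> U\<close> assms(1) by blast
    have "r = p"
    proof (rule ccontr)
      assume "r \<noteq> p"
      then have "E x z" "E z y"
        using complete[OF p(1) r(1) _ p(2) r(2)] complete[OF r(1) q(1) _ r(2) q(2)] \<open>p = q\<close>
        by auto
      then have "reach_in E U x y"
        using reach_in_trans reach_in_step xy(1,2) \<open>z \<in> U\<close> by metis
      with xy(3) show False ..
    qed
    with r show ?thesis by simp
  qed
  with p(1) show ?thesis by blast
qed

lemma wf_cotree_leaves_nonempty: "wf_cotree t \<Longrightarrow> leaves t \<noteq> {}"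
proof (induction t)
  case (CNode b ts)
  then have "hd ts \<in> set ts" by (cases ts) auto
  with CNode show ?case by fastforce
qed simp

lemma wf_cotree_children_disjoint:
  assumes "wf_cotree (CNode b ts)" "s \<in> set ts" "t \<in> set ts" "s \<noteq> t"
  shows "leaves s \<inter> leaves t = {}"
  using assms by (auto simp: in_set_conv_nth)

lemma wf_cotree_two_children:
  assumes "wf_cotree (CNode b ts)"
  obtains s t where "s \<in> set ts" "t \<in> set ts" "s \<noteq> t"
proof -
  have "0 < length ts" "1 < length ts" using assms by auto
  moreover from this have "leaves (ts ! 0) \<inter> leaves (ts ! 1) = {}" "wf_cotree (ts ! 0)"
    using assms by auto
  then have "ts ! 0 \<noteq> ts ! 1" using wf_cotree_leaves_nonempty by fastforce
  ultimately show ?thesis using that nth_mem by blast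
qed

lemma lca_is_join_distinct_children:
  assumes "wf_cotree (CNode b ts)" "s \<in> set ts" "t \<in> set ts" "s \<noteq> t"
    and "u \<in> leaves s" "v \<in> leaves t"
  shows "lca_is_join (CNode b ts) u v = b"
proof -
  have "\<not> (\<exists>r\<in>set ts. u \<in> leaves r \<and> v \<in> leaves r \<and> lca_is_join r u v)"
    using assms wf_cotree_children_disjoint by blast
  moreover obtain i j where "i < length ts" "j < length ts" "s = ts ! i" "t = ts ! j"
    using assms(2,3) by (metis in_set_conv_nth)
  ultimately show ?thesis using assms(4-6) by auto
qed

lemma lca_is_join_same_child:
  assumes wf: "wf_cotree (CNode b ts)" and t: "t \<in> set ts" and "u \<in> leaves t" "v \<in> leaves t"
  shows "lca_is_join (CNode b ts) u v = lca_is_join t u v"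
proof -
  have unique: "r = t" if "r \<in> set ts" "x \<in> leaves r" "x \<in> leaves t" for r x
    using that wf_cotree_children_disjoint[OF wf _ t] by blast
  have "\<not> (\<exists>i<length ts. \<exists>j<length ts. i \<noteq> j \<and> u \<in> leaves (ts ! i) \<and> v \<in> leaves (ts ! j))"
  proof
    assume "\<exists>i<length ts. \<exists>j<length ts. i \<noteq> j \<and> u \<in> leaves (ts ! i) \<and> v \<in> leaves (ts ! j)"
    then obtain i j where ij: "i < length ts" "j < length ts" "i \<noteq> j"
      "u \<in> leaves (ts ! i)" "v \<in> leaves (ts ! j)" by blast
    then have "ts ! i = t" "ts ! j = t" using unique nth_mem assms(3,4) by blast+
    moreover have "leaves (ts ! i) \<inter> leaves (ts ! j) = {}" using wf ij(1-3) by simp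
    ultimately show False using ij(4) by auto
  qed
  moreover have "(\<exists>r\<in>set ts. u \<in> leaves r \<and> v \<in> leaves r \<and> lca_is_join r u v) = lca_is_join t u v"
    using unique t assms(3,4) by blast
  ultimately show ?thesis unfolding lca_is_join.simps by blast
qed

lemma disconnected_on_union_node:
  assumes wf: "wf_cotree (CNode False us)"
    and edge: "\<And>u v. u \<in> leaves (CNode False us) \<Longrightarrow> v \<in> leaves (CNode False us) \<Longrightarrow>
      E u v \<Longrightarrow> lca_is_join (CNode False us) u v"
  shows "disconnected_on E (leaves (CNode False us))"
proof -
  obtain s t where st: "s \<in> set us" "t \<in> set us" "s \<noteq> t"
    using wf wf_cotree_two_children by blast
  have "wf_cotree s" "wf_cotree t" using wf st(1,2) by auto
  then obtain x y where x: "x \<in> leaves s" and y: "y \<in> leaves t"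
    using wf_cotree_leaves_nonempty by blast
  have "y \<notin> leaves s" using wf_cotree_children_disjoint[OF wf st] y by blast
  moreover have "y \<in> leaves s" if "reach_in E (leaves (CNode False us)) x y"
    using that x
  proof (rule reach_in_closed)
    fix a d assume a: "a \<in> leaves s" and d: "d \<in> leaves (CNode False us)" and "E a d"
    have "a \<in> leaves (CNode False us)" using a st(1) by auto
    then have join: "lca_is_join (CNode False us) a d" using edge d \<open>E a d\<close> by blast
    obtain r where r: "r \<in> set us" "d \<in> leaves r" using d by auto
    have "r = s"
    proof (rule ccontr)
      assume "r \<noteq> s"
      with join show False using lca_is_join_distinct_children[OF wf st(1) r(1) _ a r(2)] by simp
    qed
    with r show "d \<in> leaves s" by simp
  qed
  moreover have "x \<in> leaves (CNode False us)" "y \<in> leaves (CNode False us)"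
    using st x y by auto
  ultimately show ?thesis unfolding disconnected_on_def by blast
qed

lemma simple_graph_edge: "simple_graph V E \<Longrightarrow> E u v \<Longrightarrow> u \<in> V \<and> v \<in> V \<and> u \<noteq> v"
  unfolding simple_graph_def by blast

lemma is_cotree_of_edge:
  "simple_graph V E \<Longrightarrow> is_cotree_of T V E \<Longrightarrow> E u v \<Longrightarrow> lca_is_join T u v"
  unfolding is_cotree_of_def using simple_graph_edge by metis

lemma connected_cotree_root_is_join:
  assumes "simple_graph V E" "connected_on E V" "is_cotree_of (CNode b ts) V E"
  shows b
proof (rule ccontr)
  assume "\<not> b"
  then have "disconnected_on E V"
    using assms disconnected_on_union_node[of ts E] is_cotree_of_edge[OF assms(1,3)]
    by (auto simp: is_cotree_of_def)
  with assms(2) show False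
    unfolding connected_on_def disconnected_on_def by blast
qed

lemma join_cotree_adjacent:
  assumes "is_cotree_of (CNode True ts) V E" "s \<in> set ts" "t \<in> set ts" "s \<noteq> t"
    and "x \<in> leaves s" "y \<in> leaves t"
  shows "E x y"
proof -
  have wf: "wf_cotree (CNode True ts)" and V: "V = leaves (CNode True ts)"
    using assms(1) by (auto simp: is_cotree_of_def)
  have "x \<noteq> y" using wf_cotree_children_disjoint[OF wf assms(2-4)] assms(5,6) by blast
  moreover have "x \<in> V" "y \<in> V" using V assms(2,3,5,6) by auto
  ultimately show ?thesis
    using assms(1) lca_is_join_distinct_children[OF wf assms(2-6)] by (simp add: is_cotree_of_def)
qed

lemma join_cotree_disconnected_inside_child:
  assumes "is_cotree_of (CNode True ts) V E" "U \<subseteq> V" "disconnected_on E U"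
  shows "\<exists>w\<in>set ts. U \<subseteq> leaves w"
proof -
  have "\<exists>p\<in>leaves ` set ts. U \<subseteq> p"
  proof (rule disconnected_on_inside_part[OF _ _ assms(3)])
    show "U \<subseteq> \<Union> (leaves ` set ts)" using assms(1,2) by (auto simp: is_cotree_of_def)
  next
    fix p q x y assume "p \<in> leaves ` set ts" "q \<in> leaves ` set ts" "p \<noteq> q" "x \<in> p" "y \<in> q"
    then show "E x y" using join_cotree_adjacent[OF assms(1)] by blast
  qed
  then show ?thesis by blast
qed

lemma join_cotree_child_minimal_separator:
  assumes "simple_graph V E" and cotree: "is_cotree_of (CNode True ts) V E"
    and w: "w \<in> set ts" "\<not> is_leaf w"
  shows "minimal_vertex_separator V E (V - leaves w)"
proof -
  have wf: "wf_cotree (CNode True ts)" and V: "V = leaves (CNode True ts)"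
    using cotree by (auto simp: is_cotree_of_def)
  obtain c us where "w = CNode c us" using w(2) by (cases w) auto
  moreover have wf_w: "wf_cotree w" and "label w \<noteq> Some True" using wf w(1) by auto
  ultimately have w_node: "w = CNode False us" by simp
  have w_sub: "leaves w \<subseteq> V" using V w(1) by auto
  have w_ne: "leaves w \<noteq> {}" using wf_cotree_leaves_nonempty[OF wf_w] .
  have "disconnected_on E (leaves w)"
    unfolding w_node
  proof (rule disconnected_on_union_node)
    show "wf_cotree (CNode False us)" using wf_w w_node by simp
    fix u v assume "u \<in> leaves (CNode False us)" "v \<in> leaves (CNode False us)" "E u v"
    then show "lca_is_join (CNode False us) u v"
      using is_cotree_of_edge[OF assms(1) cotree] lca_is_join_same_child[OF wf w(1)] w_node
      by metis
  qed
  moreover have "V - (V - leaves w) = leaves w" using w_sub by blast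
  ultimately have separator: "vertex_separator V E (V - leaves w)"
    unfolding vertex_separator_def using w_sub w_ne by auto
  have "\<not> vertex_separator V E S'" if "S' \<subset> V - leaves w" for S'
  proof
    assume "vertex_separator V E S'"
    then obtain t where t: "t \<in> set ts" "V - S' \<subseteq> leaves t"
      using join_cotree_disconnected_inside_child[OF cotree] unfolding vertex_separator_def
      by blast
    obtain z where z: "z \<in> V - S'" "z \<notin> leaves w" using \<open>S' \<subset> V - leaves w\<close> by blast
    have "leaves w \<subseteq> V - S'" using w_sub \<open>S' \<subset> V - leaves w\<close> by blast
    then have "leaves w \<inter> leaves t \<noteq> {}" using t(2) w_ne by blast
    then have "t = w" using wf_cotree_children_disjoint[OF wf w(1) t(1)] by blast
    with z t(2) show False by blast
  qed
  with separator show ?thesis unfolding minimal_vertex_separator_def by blast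
qed

lemma join_cotree_minimal_separator_is_child:
  assumes "simple_graph V E" and cotree: "is_cotree_of (CNode True ts) V E"
    and "minimal_vertex_separator V E S"
  shows "\<exists>w\<in>set ts. \<not> is_leaf w \<and> S = V - leaves w"
proof -
  have separator: "vertex_separator V E S"
    and minimal: "\<And>S'. S' \<subset> S \<Longrightarrow> \<not> vertex_separator V E S'"
    using assms(3) unfolding minimal_vertex_separator_def by auto
  then have disconnected: "disconnected_on E (V - S)" unfolding vertex_separator_def by blast
  then obtain w where w: "w \<in> set ts" "V - S \<subseteq> leaves w"
    using join_cotree_disconnected_inside_child[OF cotree] by blast
  have "\<not> is_leaf w"
    using disconnected w(2) by (cases w) (auto elim: disconnected_on_obtains_distinct)
  moreover have "V - leaves w \<subseteq> S" using w(2) by blast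
  moreover have "vertex_separator V E (V - leaves w)"
    using join_cotree_child_minimal_separator[OF assms(1) cotree w(1) \<open>\<not> is_leaf w\<close>]
    unfolding minimal_vertex_separator_def by blast
  ultimately show ?thesis using minimal w(1) by blast
qed

theorem lemma3:
  fixes V :: "'a set" and E :: "'a \<Rightarrow> 'a \<Rightarrow> bool" and T :: "'a cotree"
  assumes "simple_graph V E"
    and "connected_on E V"
    and "is_cotree_of T V E"
  shows "{S. minimal_vertex_separator V E S} =
         {V - leaves w | w. w \<in> set (children T) \<and> \<not> is_leaf w}"
proof (cases T)
  case (CLeaf a)
  then have "V = {a}" using assms(3) by (simp add: is_cotree_of_def)
  then have "\<not> minimal_vertex_separator V E S" for S
    unfolding minimal_vertex_separator_def vertex_separator_def
    by (metis Diff_subset disconnected_on_obtains_distinct singletonD subsetD)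
  with CLeaf show ?thesis by simp
next
  case (CNode b ts)
  with assms have b using connected_cotree_root_is_join by blast
  with CNode assms(3) have join: "is_cotree_of (CNode True ts) V E" by simp
  show ?thesis
    unfolding CNode children.simps
    using join_cotree_minimal_separator_is_child[OF assms(1) join]
      join_cotree_child_minimal_separator[OF assms(1) join]
    by blast
qed

end
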